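(* In the setting of the context (with assumptions (A.1)–(A.3)), suppose the PMM generates infinite sequences $\{(u_k,v_k)\}$, $\{(z_k,w_k)\}$, $\{\gamma_k\}$, $\{\rho_k\}$, and define $x_k=z_{k-1}+\lambda w_{k-1}+\lambda(Cv_k-d)$, $b_k=d-Cv_k$, $y_k=x_k-\lambda(w_{k-1}-Mu_k)$, $a_k=-Mu_k$. Then: (a) there exist a solution $z^*$ of the dual problem $\max_z\varphi(z)$ and $w^*\in\mathbb{R}^n$ with $-w^*\in\partial h_1(z^* )$, $w^*\in\partial h_2(z^* )$, such that $(x_k,b_k)\to(z^*,w^* )$, $(y_k,-a_k)\to(z^*,w^* )$ and $(z_k,w_k)\to(z^*,w^* )$; (b) $Mu_k+Cv_k-d\to0$ and $x_k-y_k\to0$; (c) $\lim_{k\to\infty}f(u_k)+g(v_k)=p^*$, where $p^*$ is the optimal value of $\min\{f(u)+g(v):Mu+Cv=d\}$.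
   Context: Let $f:\mathbb{R}^{m_1}\to(-\infty,\infty]$, $g:\mathbb{R}^{m_2}\to(-\infty,\infty]$ be proper closed convex, $M:\mathbb{R}^{m_1}\to\mathbb{R}^n$, $C:\mathbb{R}^{m_2}\to\mathbb{R}^n$ linear, $d\in\mathbb{R}^n$; consider $\min\{f(u)+g(v):Mu+Cv=d\}$ with Lagrangian $L(u,v,z)=f(u)+g(v)+\langle Mu+Cv-d,z\rangle$, dual function $\varphi(z)=\inf_{(u,v)}L(u,v,z)$ and dual problem $\max_z\varphi(z)$. A saddle point is $(u^*,v^*,z^* )$ with $L(u^*,v^*,z^* )$ finite and $\min_{(u,v)}L(u,v,z^* )=L(u^*,v^*,z^* )=\max_zL(u^*,v^*,z)$. Let $h_1(z)=f^*(-M^*z)$, $h_2(z)=g^*(-C^*z)+\langle d,z\rangle$ ($^*$ on functions = Fenchel conjugate, on operators = adjoint). Standing assumptions: (A.1) $L$ has a saddle point; (A.2) $\mathrm{ri}(\mathrm{dom} f^* )\cap\mathrm{range}(M^* )\ne\emptyset$; (A.3) $\mathrm{ri}(\mathrm{dom} g^* )\cap\mathrm{range}(C^* )\ne\emptyset$. PMM: given $(z_0,w_0)\in\mathbb{R}^n\times\mathbb{R}^n$, $\lambda>0$, $\bar\rho\in[0,1)$, for $k=1,2,\dots$: (1) let $v_k$ be a minimizer of $g(v)+\langle z_{k-1}+\lambda w_{k-1},Cv-d\rangle+\frac\lambda2\|Cv-d\|^2$ and $u_k$ a minimizer of $f(u)+\langle z_{k-1}+\lambda(Cv_k-d),Mu\rangle+\frac\lambda2\|Mu\|^2$;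 (2) if $\|Mu_k+Cv_k-d\|+\|Mu_k-w_{k-1}\|=0$ stop; otherwise set $\gamma_k=\dfrac{\lambda\|Cv_k-d+w_{k-1}\|^2+\lambda\langle d-Cv_k-Mu_k,w_{k-1}-Mu_k\rangle}{\|Mu_k+Cv_k-d\|^2+\lambda^2\|Mu_k-w_{k-1}\|^2}$; (3) choose $\rho_k\in[1-\bar\rho,1+\bar\rho]$ and set $z_k=z_{k-1}+\rho_k\gamma_k(Mu_k+Cv_k-d)$, $w_k=w_{k-1}-\rho_k\gamma_k\lambda(w_{k-1}-Mu_k)$. *)

theory Defs
  imports "HOL-Analysis.Analysis"
begin

definition proper_fun :: "('a \<Rightarrow> ereal) \<Rightarrow> bool" where
  "proper_fun f \<longleftrightarrow> (\<forall>x. f x \<noteq> -\<infinity>) \<and> (\<exists>x. f x \<noteq> \<infinity>)"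

definition epigraph_e :: "('a \<Rightarrow> ereal) \<Rightarrow> ('a \<times> real) set" where
  "epigraph_e f = {(x, r). f x \<le> ereal r}"

definition convex_fun :: "('a::real_vector \<Rightarrow> ereal) \<Rightarrow> bool" where
  "convex_fun f \<longleftrightarrow> convex (epigraph_e f)"

definition closed_fun :: "('a::topological_space \<Rightarrow> ereal) \<Rightarrow> bool" where
  "closed_fun f \<longleftrightarrow> closed (epigraph_e f)"

definition edom :: "('a \<Rightarrow> ereal) \<Rightarrow> 'a set" where
  "edom f = {x. f x < \<infinity>}"

definition fconj :: "('a::real_inner \<Rightarrow> ereal) \<Rightarrow> 'a \<Rightarrow> ereal" where
  "fconj f y = (SUP x. ereal (y \<bullet> x) - f x)"

definition subdiff :: "('a::real_inner \<Rightarrow> ereal) \<Rightarrow> 'a \<Rightarrow> 'a set" where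
  "subdiff h z = {s. \<bar>h z\<bar> \<noteq> \<infinity> \<and> (\<forall>y. h z + ereal (s \<bullet> (y - z)) \<le> h y)}"

definition lagr ::
  "('a \<Rightarrow> ereal) \<Rightarrow> ('b \<Rightarrow> ereal) \<Rightarrow> ('a \<Rightarrow> 'c) \<Rightarrow> ('b \<Rightarrow> 'c) \<Rightarrow> 'c::real_inner
     \<Rightarrow> 'a \<Rightarrow> 'b \<Rightarrow> 'c \<Rightarrow> ereal" where
  "lagr f g M C d u v z = f u + g v + ereal ((M u + C v - d) \<bullet> z)"

definition dual_fun ::
  "('a \<Rightarrow> ereal) \<Rightarrow> ('b \<Rightarrow> ereal) \<Rightarrow> ('a \<Rightarrow> 'c) \<Rightarrow> ('b \<Rightarrow> 'c) \<Rightarrow> 'c::real_inner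
     \<Rightarrow> 'c \<Rightarrow> ereal" where
  "dual_fun f g M C d z = (INF p. lagr f g M C d (fst p) (snd p) z)"

definition is_saddle_point ::
  "('a \<Rightarrow> ereal) \<Rightarrow> ('b \<Rightarrow> ereal) \<Rightarrow> ('a \<Rightarrow> 'c) \<Rightarrow> ('b \<Rightarrow> 'c) \<Rightarrow> 'c::real_inner
     \<Rightarrow> 'a \<Rightarrow> 'b \<Rightarrow> 'c \<Rightarrow> bool" where
  "is_saddle_point f g M C d us vs zs \<longleftrightarrow>
     \<bar>lagr f g M C d us vs zs\<bar> \<noteq> \<infinity> \<and>
     (\<forall>u v. lagr f g M C d us vs zs \<le> lagr f g M C d u v zs) \<and>
     (\<forall>z. lagr f g M C d us vs z \<le> lagr f g M C d us vs zs)"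

definition is_dual_solution ::
  "('a \<Rightarrow> ereal) \<Rightarrow> ('b \<Rightarrow> ereal) \<Rightarrow> ('a \<Rightarrow> 'c) \<Rightarrow> ('b \<Rightarrow> 'c) \<Rightarrow> 'c::real_inner
     \<Rightarrow> 'c \<Rightarrow> bool" where
  "is_dual_solution f g M C d zs \<longleftrightarrow> (\<forall>z. dual_fun f g M C d z \<le> dual_fun f g M C d zs)"

definition primal_value ::
  "('a \<Rightarrow> ereal) \<Rightarrow> ('b \<Rightarrow> ereal) \<Rightarrow> ('a \<Rightarrow> 'c) \<Rightarrow> ('b \<Rightarrow> 'c) \<Rightarrow> 'c::real_vector \<Rightarrow> ereal" where
  "primal_value f g M C d = (INF p \<in> {(u, v). M u + C v = d}. f (fst p) + g (snd p))"

definition h1_fun :: "('a::real_inner \<Rightarrow> ereal) \<Rightarrow> ('a \<Rightarrow> 'c::real_inner) \<Rightarrow> 'c \<Rightarrow> ereal" where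
  "h1_fun f M z = fconj f (- adjoint M z)"

definition h2_fun :: "('b::real_inner \<Rightarrow> ereal) \<Rightarrow> ('b \<Rightarrow> 'c::real_inner) \<Rightarrow> 'c \<Rightarrow> 'c \<Rightarrow> ereal" where
  "h2_fun g C d z = fconj g (- adjoint C z) + ereal (d \<bullet> z)"

text \<open>The PMM iteration, run for all k >= 1 without stopping.\<close>
definition pmm_seq ::
  "('a::euclidean_space \<Rightarrow> ereal) \<Rightarrow> ('b::euclidean_space \<Rightarrow> ereal) \<Rightarrow> ('a \<Rightarrow> 'c) \<Rightarrow> ('b \<Rightarrow> 'c)
   \<Rightarrow> 'c::euclidean_space \<Rightarrow> real \<Rightarrow> real
   \<Rightarrow> (nat \<Rightarrow> 'a) \<Rightarrow> (nat \<Rightarrow> 'b) \<Rightarrow> (nat \<Rightarrow> 'c) \<Rightarrow> (nat \<Rightarrow> 'c) \<Rightarrow> (nat \<Rightarrow> real) \<Rightarrow> (nat \<Rightarrow> real)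
   \<Rightarrow> bool" where
  "pmm_seq f g M C d lam rhobar u v z w \<gamma> \<rho> \<longleftrightarrow>
    (\<forall>k\<ge>1.
      (\<forall>v'. g (v k) + ereal ((z (k-1) + lam *\<^sub>R w (k-1)) \<bullet> (C (v k) - d) + lam / 2 * (norm (C (v k) - d))\<^sup>2)
            \<le> g v' + ereal ((z (k-1) + lam *\<^sub>R w (k-1)) \<bullet> (C v' - d) + lam / 2 * (norm (C v' - d))\<^sup>2)) \<and>
      (\<forall>u'. f (u k) + ereal ((z (k-1) + lam *\<^sub>R (C (v k) - d)) \<bullet> M (u k) + lam / 2 * (norm (M (u k)))\<^sup>2)
            \<le> f u' + ereal ((z (k-1) + lam *\<^sub>R (C (v k) - d)) \<bullet> M u' + lam / 2 * (norm (M u'))\<^sup>2)) \<and>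
      norm (M (u k) + C (v k) - d) + norm (M (u k) - w (k-1)) \<noteq> 0 \<and>
      \<gamma> k = (lam * (norm (C (v k) - d + w (k-1)))\<^sup>2
               + lam * ((d - C (v k) - M (u k)) \<bullet> (w (k-1) - M (u k))))
             / ((norm (M (u k) + C (v k) - d))\<^sup>2 + lam\<^sup>2 * (norm (M (u k) - w (k-1)))\<^sup>2) \<and>
      1 - rhobar \<le> \<rho> k \<and> \<rho> k \<le> 1 + rhobar \<and>
      z k = z (k-1) + (\<rho> k * \<gamma> k) *\<^sub>R (M (u k) + C (v k) - d) \<and>
      w k = w (k-1) - (\<rho> k * \<gamma> k * lam) *\<^sub>R (w (k-1) - M (u k)))"

end

theory Submission
  imports Defs
begin

text \<open>
  The method is a relaxed projection method for the pair \<open>(z, w)\<close>. The optimality conditions of the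
  two subproblems say that \<open>(x\<^sub>k, b\<^sub>k)\<close> lies on the graph of \<open>\<partial>h\<^sub>2\<close> and \<open>(y\<^sub>k, a\<^sub>k)\<close> on the graph of
  \<open>\<partial>h\<^sub>1\<close>. For every pair \<open>(\<zeta>, \<omega>)\<close> with \<open>-\<omega> \<in> \<partial>h\<^sub>1 \<zeta>\<close> and \<open>\<omega> \<in> \<partial>h\<^sub>2 \<zeta>\<close> (one is obtained from
  the saddle point), monotonicity of the subdifferentials and the choice of \<open>\<gamma>\<^sub>k\<close> make the squared
  distance from \<open>(z\<^sub>k, w\<^sub>k)\<close> to \<open>(\<zeta>, \<omega>)\<close> drop by a fixed multiple of
  \<open>\<parallel>b\<^sub>k - w\<^sub>k\<^sub>-\<^sub>1\<parallel>\<^sup>2 + \<parallel>w\<^sub>k\<^sub>-\<^sub>1 + a\<^sub>k\<parallel>\<^sup>2\<close>. Hence these residuals tend to zero, cluster points of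
  \<open>(z\<^sub>k, w\<^sub>k)\<close> satisfy both inclusions because subdifferential graphs of conjugates are closed, and Fejer
  monotonicity turns a convergent subsequence into convergence of the whole sequence. Passing to the
  limit in the subgradient inequalities of \<open>f\<close> and \<open>g\<close> at the iterates gives convergence of the
  objective to the saddle value and dual optimality of the limit.
\<close>

section \<open>Convex functions, conjugates and subdifferentials\<close>

lemma convex_fun_le_convex_comb:
  assumes "convex_fun h" "h x = ereal r" "h y = ereal s" "0 \<le> t" "t \<le> 1"
  shows "h (x + t *\<^sub>R (y - x)) \<le> ereal ((1 - t) * r + t * s)"
proof -
  have "(x, r) \<in> epigraph_e h" "(y, s) \<in> epigraph_e h"
    by (auto simp: epigraph_e_def assms)
  then have "(1 - t) *\<^sub>R (x, r) + t *\<^sub>R (y, s) \<in> epigraph_e h"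
    using assms(1,4,5) unfolding convex_fun_def by (intro convexD) auto
  moreover have "x + t *\<^sub>R (y - x) = (1 - t) *\<^sub>R x + t *\<^sub>R y"
    by (simp add: algebra_simps)
  ultimately show ?thesis by (simp add: epigraph_e_def)
qed

lemma le_if_le_add_small_multiple:
  fixes r0 r1 K :: real
  assumes "\<And>t. 0 < t \<Longrightarrow> t \<le> 1 \<Longrightarrow> r0 \<le> r1 + t * K"
  shows "r0 \<le> r1"
proof (rule tendsto_lowerbound)
  show "((\<lambda>t. r1 + t * K) \<longlongrightarrow> r1) (at_right 0)"
    by (auto intro!: tendsto_eq_intros)
  show "\<forall>\<^sub>F t in at_right 0. r0 \<le> r1 + t * K"
    unfolding eventually_at_right_field by (intro exI[of _ 1]) (auto intro: assms)
qed simp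

lemma proper_fun_finite_if_le:
  assumes "proper_fun h" "\<And>x. h x0 \<le> h x + ereal (c x)"
  shows "\<bar>h x0\<bar> \<noteq> \<infinity>"
proof -
  obtain x1 where "h x1 \<noteq> \<infinity>" using assms(1) by (auto simp: proper_fun_def)
  with assms(2)[of x1] have "h x0 \<noteq> \<infinity>" by auto
  with assms(1) show ?thesis by (auto simp: proper_fun_def)
qed

lemma convex_minimizer_first_order:
  fixes h :: "'a::real_vector \<Rightarrow> ereal"
  assumes "convex_fun h" "proper_fun h"
    and min: "\<And>x. h x0 + ereal (Q x0) \<le> h x + ereal (Q x)"
    and slope: "\<And>t. 0 < t \<Longrightarrow> t \<le> 1 \<Longrightarrow> Q (x0 + t *\<^sub>R (x1 - x0)) - Q x0 \<le> t * D + t\<^sup>2 * K"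
  shows "h x0 \<le> h x1 + ereal D"
proof -
  have "h x0 \<le> h x + ereal (Q x - Q x0)" for x
    using min[of x] by (cases "h x0"; cases "h x") auto
  then have "\<bar>h x0\<bar> \<noteq> \<infinity>"
    by (rule proper_fun_finite_if_le[OF assms(2)])
  then obtain r0 where r0: "h x0 = ereal r0" by auto
  show ?thesis
  proof (cases "h x1")
    case (real r1)
    have "r0 \<le> r1 + D"
    proof (rule le_if_le_add_small_multiple)
      fix t :: real assume t: "0 < t" "t \<le> 1"
      have "ereal (r0 + Q x0) \<le> h (x0 + t *\<^sub>R (x1 - x0)) + ereal (Q (x0 + t *\<^sub>R (x1 - x0)))"
        using min r0 by (metis plus_ereal.simps(1))
      also have "\<dots> \<le> ereal ((1 - t) * r0 + t * r1) + ereal (Q (x0 + t *\<^sub>R (x1 - x0)))"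
        using convex_fun_le_convex_comb[OF assms(1) r0 real] t by (intro add_right_mono) auto
      finally have "t * r0 \<le> t * (r1 + D + t * K)"
        using slope[OF t] by (simp add: algebra_simps power2_eq_square)
      then show "r0 \<le> r1 + D + t * K" using t by simp
    qed
    then show ?thesis using r0 real by simp
  next
    case MInf
    with assms(2) show ?thesis by (simp add: proper_fun_def)
  qed simp
qed

lemma prox_subgradient_inequality:
  fixes h :: "'a::real_vector \<Rightarrow> ereal" and L :: "'a \<Rightarrow> 'c::real_inner"
  assumes "linear L" "convex_fun h" "proper_fun h"
    and min: "\<And>x. h x0 + ereal (p \<bullet> (L x0 - e) + c / 2 * (norm (L x0 - e))\<^sup>2)
                   \<le> h x + ereal (p \<bullet> (L x - e) + c / 2 * (norm (L x - e))\<^sup>2)"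
  shows "h x0 \<le> h x1 + ereal ((p + c *\<^sub>R (L x0 - e)) \<bullet> (L x1 - L x0))"
proof (rule convex_minimizer_first_order[OF assms(2,3),
      where Q = "\<lambda>x. p \<bullet> (L x - e) + c / 2 * (norm (L x - e))\<^sup>2", OF min])
  fix t :: real
  define q where "q = L x0 - e"
  define \<delta> where "\<delta> = L x1 - L x0"
  have "L (x0 + t *\<^sub>R (x1 - x0)) - e = q + t *\<^sub>R \<delta>"
    using assms(1) by (simp add: q_def \<delta>_def linear_add linear_scale linear_diff algebra_simps)
  then show "(p \<bullet> (L (x0 + t *\<^sub>R (x1 - x0)) - e) + c / 2 * (norm (L (x0 + t *\<^sub>R (x1 - x0)) - e))\<^sup>2)
      - (p \<bullet> (L x0 - e) + c / 2 * (norm (L x0 - e))\<^sup>2)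
      \<le> t * ((p + c *\<^sub>R (L x0 - e)) \<bullet> (L x1 - L x0)) + t\<^sup>2 * (c / 2 * (norm (L x1 - L x0))\<^sup>2)"
    unfolding q_def[symmetric] \<delta>_def[symmetric] power2_norm_eq_inner
    by (simp add: inner_add_left inner_add_right inner_commute algebra_simps power2_eq_square)
qed

lemma fenchel_young_ineq: "ereal (y \<bullet> x) - F x \<le> fconj F y"
  unfolding fconj_def by (rule SUP_upper) simp

lemma h1_fun_eq_h2_fun: "h1_fun f M = h2_fun f M 0"
  by (simp add: fun_eq_iff h1_fun_def h2_fun_def)

lemma h2_fun_lower_bound:
  fixes F :: "'a::euclidean_space \<Rightarrow> ereal" and A :: "'a \<Rightarrow> 'c::euclidean_space"
  assumes "linear A" "F x = ereal r"
  shows "ereal (e \<bullet> q - q \<bullet> A x - r) \<le> h2_fun F A e q"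
proof -
  have "ereal (- (q \<bullet> A x) - r) \<le> fconj F (- adjoint A q)"
    using fenchel_young_ineq[of "- adjoint A q" x F] assms by (simp add: adjoint_clauses(2))
  then have "ereal (- (q \<bullet> A x) - r) + ereal (e \<bullet> q) \<le> h2_fun F A e q"
    unfolding h2_fun_def by (rule add_right_mono)
  then show ?thesis by (simp add: algebra_simps)
qed

lemma h2_fun_not_MInf:
  fixes F :: "'a::euclidean_space \<Rightarrow> ereal" and A :: "'a \<Rightarrow> 'c::euclidean_space"
  assumes "linear A" "proper_fun F"
  shows "h2_fun F A e q \<noteq> -\<infinity>"
proof -
  obtain x r where "F x = ereal r"
    using assms(2) unfolding proper_fun_def by (metis ereal_cases)
  from h2_fun_lower_bound[OF assms(1), where F = F and e = e and q = q, OF this] show ?thesis by auto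
qed

lemma subdiff_h2_funI:
  fixes F :: "'a::euclidean_space \<Rightarrow> ereal" and A :: "'a \<Rightarrow> 'c::euclidean_space"
  assumes A: "linear A" and F: "proper_fun F"
    and min: "\<And>x. F x0 \<le> F x + ereal (q0 \<bullet> (A x - A x0))"
  shows "e - A x0 \<in> subdiff (h2_fun F A e) q0"
proof -
  obtain r0 where r0: "F x0 = ereal r0"
    using proper_fun_finite_if_le[OF F min] by auto
  have val: "h2_fun F A e q0 = ereal (e \<bullet> q0 - q0 \<bullet> A x0 - r0)"
  proof (rule antisym)
    have "fconj F (- adjoint A q0) \<le> ereal (- (q0 \<bullet> A x0) - r0)"
      unfolding fconj_def
    proof (rule SUP_least)
      fix x
      show "ereal ((- adjoint A q0) \<bullet> x) - F x \<le> ereal (- (q0 \<bullet> A x0) - r0)"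
      proof (cases "F x")
        case (real r)
        with min[of x] r0 show ?thesis by (simp add: adjoint_clauses(2)[OF A] inner_diff_right)
      qed (use F in \<open>auto simp: proper_fun_def\<close>)
    qed
    then have "h2_fun F A e q0 \<le> ereal (- (q0 \<bullet> A x0) - r0) + ereal (e \<bullet> q0)"
      unfolding h2_fun_def by (rule add_right_mono)
    then show "h2_fun F A e q0 \<le> ereal (e \<bullet> q0 - q0 \<bullet> A x0 - r0)"
      by (simp add: algebra_simps)
  qed (rule h2_fun_lower_bound[OF A, where F = F, OF r0])
  show ?thesis unfolding subdiff_def
  proof (intro CollectI conjI allI)
    fix q
    have "h2_fun F A e q0 + ereal ((e - A x0) \<bullet> (q - q0)) = ereal (e \<bullet> q - q \<bullet> A x0 - r0)"
      by (simp add: val inner_diff_left inner_diff_right inner_commute algebra_simps)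
    also have "\<dots> \<le> h2_fun F A e q" by (rule h2_fun_lower_bound[OF A, where F = F, OF r0])
    finally show "h2_fun F A e q0 + ereal ((e - A x0) \<bullet> (q - q0)) \<le> h2_fun F A e q" .
  qed (simp add: val)
qed

lemma subdiff_monotone:
  assumes "s \<in> subdiff h q" "s' \<in> subdiff h q'"
  shows "0 \<le> (s - s') \<bullet> (q - q')"
proof -
  have "\<bar>h q\<bar> \<noteq> \<infinity>" "\<bar>h q'\<bar> \<noteq> \<infinity>"
    using assms unfolding subdiff_def by auto
  then obtain r r' where r: "h q = ereal r" "h q' = ereal r'" by auto
  have "h q + ereal (s \<bullet> (q' - q)) \<le> h q'" "h q' + ereal (s' \<bullet> (q - q')) \<le> h q"
    using assms unfolding subdiff_def by auto
  then have "r + s \<bullet> (q' - q) \<le> r'" "r' + s' \<bullet> (q - q') \<le> r" using r by auto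
  then show ?thesis by (simp add: inner_diff_left inner_diff_right inner_commute algebra_simps)
qed

lemma h2_fun_lsc:
  fixes F :: "'a::euclidean_space \<Rightarrow> ereal" and A :: "'a \<Rightarrow> 'c::euclidean_space"
  assumes A: "linear A" and F: "proper_fun F"
    and lim: "q \<longlonglongrightarrow> q0" "r \<longlonglongrightarrow> r0" and le: "\<And>k. h2_fun F A e (q k) \<le> ereal (r k)"
  shows "h2_fun F A e q0 \<le> ereal r0"
proof -
  have "fconj F (- adjoint A q0) \<le> ereal (r0 - e \<bullet> q0)"
    unfolding fconj_def
  proof (rule SUP_least)
    fix x
    show "ereal ((- adjoint A q0) \<bullet> x) - F x \<le> ereal (r0 - e \<bullet> q0)"
    proof (cases "F x")
      case (real Fx)
      have "e \<bullet> q k - q k \<bullet> A x - Fx \<le> r k" for k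
        using order_trans[OF h2_fun_lower_bound[OF A, where F = F, OF real] le] by simp
      moreover have "(\<lambda>k. e \<bullet> q k - q k \<bullet> A x - Fx) \<longlonglongrightarrow> e \<bullet> q0 - q0 \<bullet> A x - Fx"
        by (intro tendsto_intros lim)
      ultimately have "e \<bullet> q0 - q0 \<bullet> A x - Fx \<le> r0"
        using LIMSEQ_le[OF _ lim(2)] by blast
      then show ?thesis using real by (simp add: adjoint_clauses(2)[OF A])
    qed (use F in \<open>auto simp: proper_fun_def\<close>)
  qed
  then have "h2_fun F A e q0 \<le> ereal (r0 - e \<bullet> q0) + ereal (e \<bullet> q0)"
    unfolding h2_fun_def by (rule add_right_mono)
  then show ?thesis by simp
qed

lemma subdiff_h2_fun_closed:
  fixes F :: "'a::euclidean_space \<Rightarrow> ereal" and A :: "'a \<Rightarrow> 'c::euclidean_space"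
  assumes A: "linear A" and F: "proper_fun F"
    and sd: "\<And>k. s k \<in> subdiff (h2_fun F A e) (q k)" and lim: "q \<longlonglongrightarrow> q0" "s \<longlonglongrightarrow> s0"
  shows "s0 \<in> subdiff (h2_fun F A e) q0"
proof -
  let ?H = "h2_fun F A e"
  have key: "?H q0 \<le> ereal (R - s0 \<bullet> (q' - q0))" if R: "?H q' = ereal R" for q' R
  proof (rule h2_fun_lsc[OF A F lim(1)])
    show "(\<lambda>k. R - s k \<bullet> (q' - q k)) \<longlonglongrightarrow> R - s0 \<bullet> (q' - q0)"
      by (intro tendsto_intros lim)
    fix k
    have "?H (q k) + ereal (s k \<bullet> (q' - q k)) \<le> ?H q'" and "\<bar>?H (q k)\<bar> \<noteq> \<infinity>"
      using sd[of k] unfolding subdiff_def by auto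
    then show "?H (q k) \<le> ereal (R - s k \<bullet> (q' - q k))"
      using R by (cases "?H (q k)") auto
  qed
  obtain R0 where "?H (q 0) = ereal R0"
    using sd[of 0] unfolding subdiff_def by (cases "?H (q 0)") auto
  from key[OF this] have fin: "\<bar>?H q0\<bar> \<noteq> \<infinity>"
    using h2_fun_not_MInf[OF A F] by auto
  show ?thesis unfolding subdiff_def
  proof (intro CollectI conjI allI fin)
    fix q'
    show "?H q0 + ereal (s0 \<bullet> (q' - q0)) \<le> ?H q'"
    proof (cases "?H q'")
      case (real R)
      with key[OF real] fin show ?thesis by (cases "?H q0") auto
    qed (use h2_fun_not_MInf[OF A F] in auto)
  qed
qed

section \<open>The Fejer inequality of one step\<close>

text \<open>\<open>\<rho> * (\<Phi> / N)\<close> is the relaxed step length \<open>\<rho>\<^sub>k \<gamma>\<^sub>k\<close>, \<open>\<Phi>\<close> and \<open>N\<close> the numerator and denominator of \<open>\<gamma>\<^sub>k\<close>.\<close>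
lemma fejer_scalar_bound:
  fixes N \<Phi> B \<rho> rb e lam :: real
  assumes N: "N > 0" and B: "\<Phi> \<le> B" and \<Phi>: "lam * e / 2 \<le> \<Phi>" and Ne: "N \<le> (2 + lam\<^sup>2) * e"
    and lam: "lam > 0" and e: "e \<ge> 0" and rb: "0 \<le> rb" "rb < 1" and rho: "1 - rb \<le> \<rho>" "\<rho> \<le> 1 + rb"
  shows "- 2 * (\<rho> * (\<Phi> / N)) * B + (\<rho> * (\<Phi> / N))\<^sup>2 * N
           + (1 - rb\<^sup>2) * (lam\<^sup>2 / (4 * (2 + lam\<^sup>2))) * e \<le> 0"
proof -
  have \<Phi>0: "\<Phi> \<ge> 0" using \<Phi> lam e by (smt (verit) divide_nonneg_nonneg mult_nonneg_nonneg)
  define G where "G = \<rho> * (\<Phi> / N)"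
  have "\<rho> \<ge> 0" using rho rb by linarith
  with \<Phi>0 N have "G \<ge> 0" by (simp add: G_def)
  then have "- 2 * G * B + G\<^sup>2 * N \<le> - 2 * G * \<Phi> + G\<^sup>2 * N"
    using B by (simp add: mult_left_mono)
  also have "\<dots> = - (\<rho> * (2 - \<rho>) * (\<Phi>\<^sup>2 / N))"
    using N by (simp add: G_def field_simps power2_eq_square)
  also have "\<dots> \<le> - ((1 - rb\<^sup>2) * (lam\<^sup>2 / (4 * (2 + lam\<^sup>2)) * e))"
  proof -
    have "(1 - \<rho>)\<^sup>2 \<le> rb\<^sup>2" using rho rb by (simp add: abs_le_square_iff[symmetric] abs_le_iff)
    then have rho_bound: "1 - rb\<^sup>2 \<le> \<rho> * (2 - \<rho>)" by (simp add: power2_eq_square algebra_simps)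
    have "lam\<^sup>2 / (4 * (2 + lam\<^sup>2)) * e * N \<le> lam\<^sup>2 / (4 * (2 + lam\<^sup>2)) * e * ((2 + lam\<^sup>2) * e)"
      using Ne e by (intro mult_left_mono) auto
    also have "\<dots> = (lam * e / 2)\<^sup>2"
      using add_pos_nonneg[of 2 "lam\<^sup>2"] by (simp add: field_simps power2_eq_square)
    also have "\<dots> \<le> \<Phi>\<^sup>2" using \<Phi> lam e by (intro power_mono) auto
    finally have "lam\<^sup>2 / (4 * (2 + lam\<^sup>2)) * e \<le> \<Phi>\<^sup>2 / N" using N by (simp add: field_simps)
    moreover have "0 \<le> lam\<^sup>2 / (4 * (2 + lam\<^sup>2)) * e" using e by simp
    moreover have "0 \<le> 1 - rb\<^sup>2" using rb by (simp add: abs_square_le_1)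
    ultimately show ?thesis using rho_bound by (smt (verit) mult_mono)
  qed
  finally show ?thesis unfolding G_def by simp
qed

lemma relaxed_step_sqnorm_expansion:
  fixes Z W s t \<zeta> \<omega> :: "'c::real_inner"
  shows "(norm (Z - G *\<^sub>R (s + t) - \<zeta>))\<^sup>2 + (norm (W - (G * lam) *\<^sub>R t - \<omega>))\<^sup>2
       = (norm (Z - \<zeta>))\<^sup>2 + (norm (W - \<omega>))\<^sup>2 - 2 * G * ((s + t) \<bullet> (Z - \<zeta>) + lam * (t \<bullet> (W - \<omega>)))
         + G\<^sup>2 * ((s + t) \<bullet> (s + t) + lam\<^sup>2 * (t \<bullet> t))"
proof -
  have "Z - G *\<^sub>R (s + t) - \<zeta> = (Z - \<zeta>) - G *\<^sub>R (s + t)"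
    "W - (G * lam) *\<^sub>R t - \<omega> = (W - \<omega>) - (G * lam) *\<^sub>R t"
    by (simp_all add: algebra_simps)
  then show ?thesis unfolding power2_norm_eq_inner
    by (simp add: inner_add_left inner_add_right inner_diff_left inner_diff_right inner_commute
        algebra_simps power2_eq_square)
qed

lemma relaxed_step_cross_term:
  fixes Z W s t \<zeta> \<omega> :: "'c::real_inner"
  shows "(s + t) \<bullet> (Z - \<zeta>) + lam * (t \<bullet> (W - \<omega>))
       = lam * (s \<bullet> s + s \<bullet> t + t \<bullet> t)
         + (s + W - \<omega>) \<bullet> (Z - lam *\<^sub>R s - \<zeta>) + (t - W + \<omega>) \<bullet> (Z - lam *\<^sub>R (s + t) - \<zeta>)"
proof -
  have "Z - lam *\<^sub>R s - \<zeta> = (Z - \<zeta>) - lam *\<^sub>R s" "Z - lam *\<^sub>R (s + t) - \<zeta> = (Z - \<zeta>) - lam *\<^sub>R (s + t)"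
    "s + W - \<omega> = s + (W - \<omega>)" "t - W + \<omega> = t - (W - \<omega>)"
    by (simp_all add: algebra_simps)
  then show ?thesis
    by (simp add: inner_add_left inner_add_right inner_diff_left inner_diff_right inner_commute algebra_simps)
qed

text \<open>With \<open>s = b\<^sub>k - w\<^sub>k\<^sub>-\<^sub>1\<close> and \<open>t = w\<^sub>k\<^sub>-\<^sub>1 + a\<^sub>k\<close>, the hypotheses \<open>mono1\<close> and \<open>mono2\<close> are the
  monotonicity of \<open>\<partial>h\<^sub>2\<close> at \<open>(x\<^sub>k, b\<^sub>k)\<close> and of \<open>\<partial>h\<^sub>1\<close> at \<open>(y\<^sub>k, a\<^sub>k)\<close> against \<open>(\<zeta>, \<omega>)\<close>.\<close>
lemma pmm_step_fejer:
  fixes Z W s t \<zeta> \<omega> :: "'c::real_inner"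
  assumes lam: "lam > 0" and rb: "0 \<le> rb" "rb < 1" and rho: "1 - rb \<le> \<rho>" "\<rho> \<le> 1 + rb"
    and nz: "s + t \<noteq> 0 \<or> t \<noteq> 0"
    and gam: "\<gamma> = lam * (s \<bullet> s + s \<bullet> t + t \<bullet> t) / ((s + t) \<bullet> (s + t) + lam\<^sup>2 * (t \<bullet> t))"
    and mono1: "0 \<le> (s + W - \<omega>) \<bullet> (Z - lam *\<^sub>R s - \<zeta>)"
    and mono2: "0 \<le> (t - W + \<omega>) \<bullet> (Z - lam *\<^sub>R (s + t) - \<zeta>)"
  shows "(norm (Z - (\<rho> * \<gamma>) *\<^sub>R (s + t) - \<zeta>))\<^sup>2 + (norm (W - (\<rho> * \<gamma> * lam) *\<^sub>R t - \<omega>))\<^sup>2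
           + (1 - rb\<^sup>2) * (lam\<^sup>2 / (4 * (2 + lam\<^sup>2))) * ((norm s)\<^sup>2 + (norm t)\<^sup>2)
         \<le> (norm (Z - \<zeta>))\<^sup>2 + (norm (W - \<omega>))\<^sup>2"
proof -
  define \<Phi> where "\<Phi> = lam * (s \<bullet> s + s \<bullet> t + t \<bullet> t)"
  define N where "N = (s + t) \<bullet> (s + t) + lam\<^sup>2 * (t \<bullet> t)"
  define e where "e = s \<bullet> s + t \<bullet> t"
  define B where "B = (s + t) \<bullet> (Z - \<zeta>) + lam * (t \<bullet> (W - \<omega>))"
  have "N > 0"
  proof -
    have "0 < (s + t) \<bullet> (s + t) \<or> 0 < lam\<^sup>2 * (t \<bullet> t)" using nz lam by auto
    then show ?thesis unfolding N_def by (smt (verit) inner_ge_zero zero_le_power2 mult_nonneg_nonneg)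
  qed
  have B_ge: "\<Phi> \<le> B"
    using relaxed_step_cross_term[of s t Z \<zeta> lam W \<omega>] mono1 mono2 by (simp add: B_def \<Phi>_def)
  have \<Phi>_ge: "lam * e / 2 \<le> \<Phi>"
  proof -
    have "e / 2 \<le> s \<bullet> s + s \<bullet> t + t \<bullet> t"
      using inner_ge_zero[of "s + t"] by (simp add: e_def inner_add_left inner_add_right inner_commute)
    with lam show ?thesis unfolding \<Phi>_def by (simp add: mult_left_mono)
  qed
  have N_le: "N \<le> (2 + lam\<^sup>2) * e"
  proof -
    have "(s + t) \<bullet> (s + t) \<le> 2 * e"
      using inner_ge_zero[of "s - t"]
      by (simp add: e_def inner_add_left inner_add_right inner_diff_left inner_diff_right inner_commute)
    moreover have "lam\<^sup>2 * (t \<bullet> t) \<le> lam\<^sup>2 * e" by (simp add: e_def mult_left_mono)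
    ultimately show ?thesis unfolding N_def by (simp add: algebra_simps)
  qed
  have "0 \<le> e" by (simp add: e_def)
  from fejer_scalar_bound[OF \<open>N > 0\<close> B_ge \<Phi>_ge N_le lam this rb rho]
  have "- 2 * (\<rho> * (\<Phi> / N)) * B + (\<rho> * (\<Phi> / N))\<^sup>2 * N
      + (1 - rb\<^sup>2) * (lam\<^sup>2 / (4 * (2 + lam\<^sup>2))) * e \<le> 0" .
  moreover have "\<gamma> = \<Phi> / N" by (simp add: gam \<Phi>_def N_def)
  ultimately show ?thesis
    using relaxed_step_sqnorm_expansion[of Z "\<rho> * \<gamma>" s t \<zeta> W lam \<omega>]
    by (simp add: B_def N_def e_def power2_norm_eq_inner)
qed

section \<open>Fejer monotone sequences\<close>

lemma tendsto_zero_if_decrease_bound: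
  fixes D e :: "nat \<Rightarrow> real"
  assumes dec: "\<And>n. D (Suc n) + e n \<le> D n" and D: "\<And>n. 0 \<le> D n" and e: "\<And>n. 0 \<le> e n"
  shows "e \<longlonglongrightarrow> 0"
proof -
  have partial: "(\<Sum>i<n. e i) \<le> D 0 - D n" for n
  proof (induction n)
    case (Suc n)
    then show ?case using dec[of n] by simp
  qed simp
  have "summable e"
    by (rule summableI_nonneg_bounded[where x = "D 0"]) (use e partial D in \<open>smt (verit)\<close>)+
  then show ?thesis by (rule summable_LIMSEQ_zero)
qed

lemma fejer_monotone_convergent:
  fixes p :: "nat \<Rightarrow> 'a::heine_borel"
  assumes fejer: "\<And>q n. q \<in> S \<Longrightarrow> dist (p (Suc n)) q \<le> dist (p n) q"
    and "q0 \<in> S"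
    and cluster: "\<And>r l. strict_mono r \<Longrightarrow> (p \<circ> r) \<longlonglongrightarrow> l \<Longrightarrow> l \<in> S"
  obtains l where "l \<in> S" "p \<longlonglongrightarrow> l"
proof -
  have dec: "decseq (\<lambda>n. dist (p n) q)" if "q \<in> S" for q
    using fejer[OF that] by (simp add: decseq_Suc_iff)
  have "dist q0 (p n) \<le> dist (p 0) q0" for n
    using decseqD[OF dec[OF \<open>q0 \<in> S\<close>], of 0 n] by (simp add: dist_commute)
  then have "range p \<subseteq> cball q0 (dist (p 0) q0)" by auto
  then have "bounded (range p)" by (rule bounded_subset[OF bounded_cball])
  then obtain l r where r: "strict_mono r" and lr: "(p \<circ> r) \<longlonglongrightarrow> l"
    by (metis bounded_imp_convergent_subsequence)
  have "l \<in> S" by (rule cluster[OF r lr])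
  obtain L where L: "(\<lambda>n. dist (p n) l) \<longlonglongrightarrow> L"
    using decseq_convergent[OF dec[OF \<open>l \<in> S\<close>], of 0] zero_le_dist by blast
  have "(\<lambda>j. dist (p (r j)) l) \<longlonglongrightarrow> L"
    using LIMSEQ_subseq_LIMSEQ[OF L r] by (simp add: o_def)
  moreover have "(\<lambda>j. dist (p (r j)) l) \<longlonglongrightarrow> 0"
    using tendsto_dist[OF lr tendsto_const, of l] by (simp add: o_def)
  ultimately have "L = 0" by (rule LIMSEQ_unique)
  with L have "(\<lambda>n. dist (p n) l) \<longlonglongrightarrow> 0" by simp
  then have "p \<longlonglongrightarrow> l" by (rule tendsto_dist_iff[THEN iffD2])
  with \<open>l \<in> S\<close> show thesis by (rule that)
qed

section \<open>Saddle points\<close>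

lemma saddle_point_optimal:
  fixes M :: "'a \<Rightarrow> 'c::real_inner" and C :: "'b \<Rightarrow> 'c"
  assumes f: "proper_fun f" and g: "proper_fun g" and sp: "is_saddle_point f g M C d us vs zs"
  obtains Fs Gs where "f us = ereal Fs" "g vs = ereal Gs" "M us + C vs = d"
    "\<And>u v. ereal (Fs + Gs) \<le> f u + g v + ereal ((M u + C v - d) \<bullet> zs)"
proof -
  have fin: "\<bar>lagr f g M C d us vs zs\<bar> \<noteq> \<infinity>"
    and min: "\<And>u v. lagr f g M C d us vs zs \<le> lagr f g M C d u v zs"
    and max: "\<And>z. lagr f g M C d us vs z \<le> lagr f g M C d us vs zs"
    using sp unfolding is_saddle_point_def by auto
  obtain Fs Gs where Fs: "f us = ereal Fs" and Gs: "g vs = ereal Gs"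
    using fin f g unfolding proper_fun_def lagr_def
    by (cases "f us"; cases "g vs") auto
  define r where "r = M us + C vs - d"
  have "Fs + Gs + r \<bullet> (zs + r) \<le> Fs + Gs + r \<bullet> zs"
    using max[of "zs + r"] by (simp add: lagr_def Fs Gs r_def)
  then have "r \<bullet> r \<le> 0" by (simp add: inner_add_right)
  then have "r = 0" by (metis inner_eq_zero_iff inner_ge_zero order_antisym)
  then have feas: "M us + C vs = d" by (simp add: r_def)
  show thesis
  proof (rule that[OF Fs Gs feas])
    fix u v
    show "ereal (Fs + Gs) \<le> f u + g v + ereal ((M u + C v - d) \<bullet> zs)"
      using min[of u v] feas by (simp add: lagr_def Fs Gs)
  qed
qed

lemma saddle_point_kkt:
  fixes f :: "'a::euclidean_space \<Rightarrow> ereal" and g :: "'b::euclidean_space \<Rightarrow> ereal"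
    and M :: "'a \<Rightarrow> 'c::euclidean_space" and C :: "'b \<Rightarrow> 'c"
  assumes M: "linear M" and C: "linear C" and f: "proper_fun f" and g: "proper_fun g"
    and sp: "is_saddle_point f g M C d us vs zs"
  shows "- M us \<in> subdiff (h1_fun f M) zs" "M us \<in> subdiff (h2_fun g C d) zs"
proof -
  obtain Fs Gs where Fs: "f us = ereal Fs" and Gs: "g vs = ereal Gs" and feas: "M us + C vs = d"
    and low: "\<And>u v. ereal (Fs + Gs) \<le> f u + g v + ereal ((M u + C v - d) \<bullet> zs)"
    using saddle_point_optimal[OF f g sp] by blast
  have "f us \<le> f u + ereal (zs \<bullet> (M u - M us))" for u
    using low[of u vs] f Fs Gs feas
    by (cases "f u") (auto simp: proper_fun_def inner_commute algebra_simps)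
  from subdiff_h2_funI[OF M f this, of 0] show "- M us \<in> subdiff (h1_fun f M) zs"
    by (simp add: h1_fun_eq_h2_fun)
  have "g vs \<le> g v + ereal (zs \<bullet> (C v - C vs))" for v
    using low[of us v] g Fs Gs feas
    by (cases "g v") (auto simp: proper_fun_def inner_commute algebra_simps)
  moreover have "d - C vs = M us" using feas by (simp add: algebra_simps)
  ultimately show "M us \<in> subdiff (h2_fun g C d) zs"
    using subdiff_h2_funI[OF C g, of vs zs d] by simp
qed

lemma primal_value_eqI:
  assumes "M us + C vs = d" "\<And>u v. M u + C v = d \<Longrightarrow> f us + g vs \<le> f u + g v"
  shows "primal_value f g M C d = f us + g vs"
  unfolding primal_value_def
proof (rule antisym)
  show "(INF p\<in>{(u, v). M u + C v = d}. f (fst p) + g (snd p)) \<le> f us + g vs"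
    by (rule INF_lower2[of "(us, vs)"]) (use assms(1) in auto)
  show "f us + g vs \<le> (INF p\<in>{(u, v). M u + C v = d}. f (fst p) + g (snd p))"
    by (rule INF_greatest) (use assms(2) in auto)
qed

section \<open>Convergence of the method\<close>

locale pmm_iteration =
  fixes f :: "'a::euclidean_space \<Rightarrow> ereal" and g :: "'b::euclidean_space \<Rightarrow> ereal"
    and M :: "'a \<Rightarrow> 'c::euclidean_space" and C :: "'b \<Rightarrow> 'c" and d :: 'c
    and lam rhobar :: real
    and u :: "nat \<Rightarrow> 'a" and v :: "nat \<Rightarrow> 'b" and z w :: "nat \<Rightarrow> 'c"
    and \<gamma> \<rho> :: "nat \<Rightarrow> real"
  assumes f_proper: "proper_fun f" and f_convex: "convex_fun f"
    and g_proper: "proper_fun g" and g_convex: "convex_fun g"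
    and M_linear: "linear M" and C_linear: "linear C"
    and saddle_exists: "\<exists>us vs zs. is_saddle_point f g M C d us vs zs"
    and lam_pos: "lam > 0" and rhobar: "0 \<le> rhobar" "rhobar < 1"
    and pmm: "pmm_seq f g M C d lam rhobar u v z w \<gamma> \<rho>"
begin

definition x :: "nat \<Rightarrow> 'c" where
  "x = (\<lambda>k. z (k-1) + lam *\<^sub>R w (k-1) + lam *\<^sub>R (C (v k) - d))"

definition b :: "nat \<Rightarrow> 'c" where
  "b = (\<lambda>k. d - C (v k))"

definition y :: "nat \<Rightarrow> 'c" where
  "y = (\<lambda>k. z (k-1) + lam *\<^sub>R w (k-1) + lam *\<^sub>R (C (v k) - d) - lam *\<^sub>R (w (k-1) - M (u k)))"

definition a :: "nat \<Rightarrow> 'c" where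
  "a = (\<lambda>k. - M (u k))"

definition s :: "nat \<Rightarrow> 'c" where
  "s n = b (Suc n) - w n"

definition t :: "nat \<Rightarrow> 'c" where
  "t n = w n + a (Suc n)"

definition kkt_set :: "('c \<times> 'c) set" where
  "kkt_set = {(\<zeta>, \<omega>). - \<omega> \<in> subdiff (h1_fun f M) \<zeta> \<and> \<omega> \<in> subdiff (h2_fun g C d) \<zeta>}"

definition \<kappa> :: real where
  "\<kappa> = (1 - rhobar\<^sup>2) * (lam\<^sup>2 / (4 * (2 + lam\<^sup>2)))"

lemma \<kappa>_pos: "\<kappa> > 0"
proof -
  have "rhobar\<^sup>2 < 1" using rhobar by (simp add: abs_square_less_1)
  with lam_pos show ?thesis unfolding \<kappa>_def by (simp add: add_pos_nonneg)
qed

lemma x_Suc: "x (Suc n) = z n - lam *\<^sub>R s n"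
  and y_Suc: "y (Suc n) = z n - lam *\<^sub>R (s n + t n)"
  and b_Suc: "b (Suc n) = s n + w n"
  and a_Suc: "a (Suc n) = t n - w n"
  by (simp_all add: x_def y_def a_def b_def s_def t_def algebra_simps)

lemma pmm_step:
  shows v_step_min: "\<And>v'. g (v (Suc n)) + ereal ((z n + lam *\<^sub>R w n) \<bullet> (C (v (Suc n)) - d)
                              + lam / 2 * (norm (C (v (Suc n)) - d))\<^sup>2)
                         \<le> g v' + ereal ((z n + lam *\<^sub>R w n) \<bullet> (C v' - d) + lam / 2 * (norm (C v' - d))\<^sup>2)"
    and u_step_min: "\<And>u'. f (u (Suc n)) + ereal ((z n + lam *\<^sub>R (C (v (Suc n)) - d)) \<bullet> M (u (Suc n))
                              + lam / 2 * (norm (M (u (Suc n))))\<^sup>2)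
                         \<le> f u' + ereal ((z n + lam *\<^sub>R (C (v (Suc n)) - d)) \<bullet> M u' + lam / 2 * (norm (M u'))\<^sup>2)"
    and step_nonstop: "norm (M (u (Suc n)) + C (v (Suc n)) - d) + norm (M (u (Suc n)) - w n) \<noteq> 0"
    and gamma_Suc: "\<gamma> (Suc n) = (lam * (norm (C (v (Suc n)) - d + w n))\<^sup>2
                       + lam * ((d - C (v (Suc n)) - M (u (Suc n))) \<bullet> (w n - M (u (Suc n)))))
                     / ((norm (M (u (Suc n)) + C (v (Suc n)) - d))\<^sup>2 + lam\<^sup>2 * (norm (M (u (Suc n)) - w n))\<^sup>2)"
    and rho_Suc: "1 - rhobar \<le> \<rho> (Suc n)" "\<rho> (Suc n) \<le> 1 + rhobar"
    and z_Suc: "z (Suc n) = z n + (\<rho> (Suc n) * \<gamma> (Suc n)) *\<^sub>R (M (u (Suc n)) + C (v (Suc n)) - d)"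
    and w_Suc: "w (Suc n) = w n - (\<rho> (Suc n) * \<gamma> (Suc n) * lam) *\<^sub>R (w n - M (u (Suc n)))"
  using pmm[unfolded pmm_seq_def, rule_format, of "Suc n"] by auto

lemma residual_Suc: "M (u (Suc n)) + C (v (Suc n)) - d = - (s n + t n)"
  by (simp add: s_def t_def a_def b_def)

lemma pmm_step_in_residuals:
  shows st_nonzero: "s n + t n \<noteq> 0 \<or> t n \<noteq> 0"
    and gamma_Suc_st: "\<gamma> (Suc n) = lam * (s n \<bullet> s n + s n \<bullet> t n + t n \<bullet> t n)
                     / ((s n + t n) \<bullet> (s n + t n) + lam\<^sup>2 * (t n \<bullet> t n))"
    and z_Suc_st: "z (Suc n) = z n - (\<rho> (Suc n) * \<gamma> (Suc n)) *\<^sub>R (s n + t n)"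
    and w_Suc_st: "w (Suc n) = w n - (\<rho> (Suc n) * \<gamma> (Suc n) * lam) *\<^sub>R t n"
proof -
  have Mu: "M (u (Suc n)) = w n - t n" and Cv: "C (v (Suc n)) = d - s n - w n"
    by (simp_all add: s_def t_def a_def b_def)
  show "s n + t n \<noteq> 0 \<or> t n \<noteq> 0"
    using step_nonstop[of n] unfolding residual_Suc unfolding Mu by auto
  show "\<gamma> (Suc n) = lam * (s n \<bullet> s n + s n \<bullet> t n + t n \<bullet> t n)
                     / ((s n + t n) \<bullet> (s n + t n) + lam\<^sup>2 * (t n \<bullet> t n))"
    unfolding gamma_Suc residual_Suc unfolding Mu Cv power2_norm_eq_inner
    by (simp add: inner_add_left inner_add_right inner_diff_left inner_diff_right inner_commute algebra_simps)
  show "z (Suc n) = z n - (\<rho> (Suc n) * \<gamma> (Suc n)) *\<^sub>R (s n + t n)"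
    unfolding z_Suc residual_Suc by (simp add: algebra_simps)
  show "w (Suc n) = w n - (\<rho> (Suc n) * \<gamma> (Suc n) * lam) *\<^sub>R t n"
    unfolding w_Suc Mu by simp
qed

lemma g_subgradient: "g (v (Suc n)) \<le> g v' + ereal (x (Suc n) \<bullet> (C v' - C (v (Suc n))))"
  using prox_subgradient_inequality[OF C_linear g_convex g_proper v_step_min, of n v']
  by (simp add: x_def algebra_simps)

lemma f_subgradient: "f (u (Suc n)) \<le> f u' + ereal (y (Suc n) \<bullet> (M u' - M (u (Suc n))))"
proof -
  let ?p = "z n + lam *\<^sub>R (C (v (Suc n)) - d)"
  have "f (u (Suc n)) + ereal (?p \<bullet> (M (u (Suc n)) - 0) + lam / 2 * (norm (M (u (Suc n)) - 0))\<^sup>2)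
      \<le> f u'' + ereal (?p \<bullet> (M u'' - 0) + lam / 2 * (norm (M u'' - 0))\<^sup>2)" for u''
    using u_step_min[of n u''] by simp
  from prox_subgradient_inequality[OF M_linear f_convex f_proper this]
  show ?thesis by (simp add: y_def algebra_simps)
qed

lemma b_in_subdiff: "b (Suc n) \<in> subdiff (h2_fun g C d) (x (Suc n))"
  using subdiff_h2_funI[OF C_linear g_proper g_subgradient] by (simp add: b_def)

lemma a_in_subdiff: "a (Suc n) \<in> subdiff (h1_fun f M) (y (Suc n))"
  using subdiff_h2_funI[OF M_linear f_proper f_subgradient, where e = 0] by (simp add: a_def h1_fun_eq_h2_fun)

lemma fejer_kkt:
  assumes "(\<zeta>, \<omega>) \<in> kkt_set"
  shows "(norm (z (Suc n) - \<zeta>))\<^sup>2 + (norm (w (Suc n) - \<omega>))\<^sup>2 + \<kappa> * ((norm (s n))\<^sup>2 + (norm (t n))\<^sup>2)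
         \<le> (norm (z n - \<zeta>))\<^sup>2 + (norm (w n - \<omega>))\<^sup>2"
proof -
  have h1: "- \<omega> \<in> subdiff (h1_fun f M) \<zeta>" and h2: "\<omega> \<in> subdiff (h2_fun g C d) \<zeta>"
    using assms by (auto simp: kkt_set_def)
  have "0 \<le> (s n + w n - \<omega>) \<bullet> (z n - lam *\<^sub>R s n - \<zeta>)"
    using subdiff_monotone[OF b_in_subdiff h2] by (simp add: x_Suc b_Suc)
  moreover have "0 \<le> (t n - w n + \<omega>) \<bullet> (z n - lam *\<^sub>R (s n + t n) - \<zeta>)"
    using subdiff_monotone[OF a_in_subdiff h1] by (simp add: y_Suc a_Suc)
  ultimately show ?thesis
    using pmm_step_fejer[OF lam_pos rhobar rho_Suc st_nonzero gamma_Suc_st]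
    by (simp add: z_Suc_st w_Suc_st \<kappa>_def)
qed

lemma kkt_set_nonempty: "\<exists>p. p \<in> kkt_set"
proof -
  obtain us vs zs where "is_saddle_point f g M C d us vs zs" using saddle_exists by blast
  from saddle_point_kkt[OF M_linear C_linear f_proper g_proper this]
  have "(zs, M us) \<in> kkt_set" by (simp add: kkt_set_def)
  then show ?thesis ..
qed

lemma residuals_tendsto_zero: "s \<longlonglongrightarrow> 0" "t \<longlonglongrightarrow> 0"
proof -
  obtain \<zeta> \<omega> where kkt: "(\<zeta>, \<omega>) \<in> kkt_set" using kkt_set_nonempty by auto
  define e where "e n = (norm (s n))\<^sup>2 + (norm (t n))\<^sup>2" for n
  have "(\<lambda>n. \<kappa> * e n) \<longlonglongrightarrow> 0"
    by (rule tendsto_zero_if_decrease_bound[where D = "\<lambda>n. (norm (z n - \<zeta>))\<^sup>2 + (norm (w n - \<omega>))\<^sup>2"])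
      (use fejer_kkt[OF kkt] \<kappa>_pos in \<open>auto simp: e_def\<close>)
  then have "(\<lambda>n. (1 / \<kappa>) * (\<kappa> * e n)) \<longlonglongrightarrow> (1 / \<kappa>) * 0" by (rule tendsto_mult_left)
  then have sqrt_lim: "(\<lambda>n. sqrt (e n)) \<longlonglongrightarrow> 0" using \<kappa>_pos tendsto_real_sqrt by fastforce
  have "norm (s n) \<le> sqrt (e n)" "norm (t n) \<le> sqrt (e n)" for n
    by (simp_all add: e_def real_le_rsqrt)
  then show "s \<longlonglongrightarrow> 0" "t \<longlonglongrightarrow> 0"
    by (intro Lim_null_comparison[OF always_eventually sqrt_lim] allI; simp)+
qed

lemma kkt_cluster:
  assumes r: "strict_mono r" and lim: "((\<lambda>n. (z n, w n)) \<circ> r) \<longlonglongrightarrow> (\<zeta>, \<omega>)"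
  shows "(\<zeta>, \<omega>) \<in> kkt_set"
proof -
  have zr: "(\<lambda>j. z (r j)) \<longlonglongrightarrow> \<zeta>" and wr: "(\<lambda>j. w (r j)) \<longlonglongrightarrow> \<omega>"
    using tendsto_fst[OF lim] tendsto_snd[OF lim] by (simp_all add: o_def)
  have sr: "(\<lambda>j. s (r j)) \<longlonglongrightarrow> 0" and tr: "(\<lambda>j. t (r j)) \<longlonglongrightarrow> 0"
    using LIMSEQ_subseq_LIMSEQ[OF residuals_tendsto_zero(1) r]
      LIMSEQ_subseq_LIMSEQ[OF residuals_tendsto_zero(2) r] by (simp_all add: o_def)
  have "\<omega> \<in> subdiff (h2_fun g C d) \<zeta>"
  proof (rule subdiff_h2_fun_closed[OF C_linear g_proper b_in_subdiff])
    show "(\<lambda>j. x (Suc (r j))) \<longlonglongrightarrow> \<zeta>"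
      using tendsto_diff[OF zr tendsto_scaleR[OF tendsto_const sr, of lam]] by (simp add: x_Suc)
    show "(\<lambda>j. b (Suc (r j))) \<longlonglongrightarrow> \<omega>"
      using tendsto_add[OF sr wr] by (simp add: b_Suc)
  qed
  moreover have "- \<omega> \<in> subdiff (h1_fun f M) \<zeta>"
    unfolding h1_fun_eq_h2_fun
  proof (rule subdiff_h2_fun_closed[OF M_linear f_proper a_in_subdiff[unfolded h1_fun_eq_h2_fun]])
    show "(\<lambda>j. y (Suc (r j))) \<longlonglongrightarrow> \<zeta>"
      using tendsto_diff[OF zr tendsto_scaleR[OF tendsto_const tendsto_add[OF sr tr], of lam]]
      by (simp add: y_Suc)
    show "(\<lambda>j. a (Suc (r j))) \<longlonglongrightarrow> - \<omega>"
      using tendsto_diff[OF tr wr] by (simp add: a_Suc)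
  qed
  ultimately show ?thesis by (simp add: kkt_set_def)
qed

lemma iterates_converge:
  obtains \<zeta> \<omega> where "(\<zeta>, \<omega>) \<in> kkt_set" "z \<longlonglongrightarrow> \<zeta>" "w \<longlonglongrightarrow> \<omega>"
proof -
  have "dist (z (Suc n), w (Suc n)) q \<le> dist (z n, w n) q" if "q \<in> kkt_set" for q n
  proof -
    obtain \<zeta> \<omega> where q: "q = (\<zeta>, \<omega>)" by fastforce
    have "(norm (z (Suc n) - \<zeta>))\<^sup>2 + (norm (w (Suc n) - \<omega>))\<^sup>2 \<le> (norm (z n - \<zeta>))\<^sup>2 + (norm (w n - \<omega>))\<^sup>2"
      using fejer_kkt[of \<zeta> \<omega> n] that \<kappa>_pos q by (smt (verit) mult_nonneg_nonneg zero_le_power2)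
    then show ?thesis by (simp add: q dist_norm norm_Pair)
  qed
  moreover obtain q0 where "q0 \<in> kkt_set" using kkt_set_nonempty by blast
  moreover have "l \<in> kkt_set" if "strict_mono r" "((\<lambda>n. (z n, w n)) \<circ> r) \<longlonglongrightarrow> l" for r l
    using kkt_cluster[OF that(1)] that(2) by (cases l) auto
  ultimately obtain l where l: "l \<in> kkt_set" "(\<lambda>n. (z n, w n)) \<longlonglongrightarrow> l"
    by (rule fejer_monotone_convergent)
  obtain \<zeta> \<omega> where "l = (\<zeta>, \<omega>)" by fastforce
  with l tendsto_fst[OF l(2)] tendsto_snd[OF l(2)] show thesis
    by (intro that) auto
qed

lemma residual_tendsto_zero: "(\<lambda>k. M (u k) + C (v k) - d) \<longlonglongrightarrow> 0"
  by (rule LIMSEQ_imp_Suc)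
    (use tendsto_minus[OF tendsto_add[OF residuals_tendsto_zero]] in \<open>simp add: residual_Suc\<close>)

lemma x_minus_y_tendsto_zero: "(\<lambda>k. x k - y k) \<longlonglongrightarrow> 0"
  by (rule LIMSEQ_imp_Suc)
    (use tendsto_scaleR[OF tendsto_const residuals_tendsto_zero(2), of lam]
      in \<open>simp add: x_Suc y_Suc algebra_simps\<close>)

lemma graph_points_tendsto:
  assumes z: "z \<longlonglongrightarrow> \<zeta>" and w: "w \<longlonglongrightarrow> \<omega>"
  shows "x \<longlonglongrightarrow> \<zeta>" "y \<longlonglongrightarrow> \<zeta>" "b \<longlonglongrightarrow> \<omega>" "(\<lambda>k. - a k) \<longlonglongrightarrow> \<omega>"
proof -
  note s = residuals_tendsto_zero(1) and t = residuals_tendsto_zero(2)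
  show "x \<longlonglongrightarrow> \<zeta>"
    by (rule LIMSEQ_imp_Suc)
      (use tendsto_diff[OF z tendsto_scaleR[OF tendsto_const s, of lam]] in \<open>simp add: x_Suc\<close>)
  show "y \<longlonglongrightarrow> \<zeta>"
    by (rule LIMSEQ_imp_Suc)
      (use tendsto_diff[OF z tendsto_scaleR[OF tendsto_const tendsto_add[OF s t], of lam]]
        in \<open>simp add: y_Suc\<close>)
  show "b \<longlonglongrightarrow> \<omega>"
    by (rule LIMSEQ_imp_Suc) (use tendsto_add[OF s w] in \<open>simp add: b_Suc\<close>)
  show "(\<lambda>k. - a k) \<longlonglongrightarrow> \<omega>"
    by (rule LIMSEQ_imp_Suc) (use tendsto_diff[OF w t] in \<open>simp add: a_Suc\<close>)
qed

lemma lagrangian_terms_tendsto: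
  assumes x: "x \<longlonglongrightarrow> \<zeta>" and y: "y \<longlonglongrightarrow> \<zeta>" and b: "b \<longlonglongrightarrow> \<omega>" and a: "(\<lambda>k. - a k) \<longlonglongrightarrow> \<omega>"
  shows "(\<lambda>n. y (Suc n) \<bullet> (M u' - M (u (Suc n))) + x (Suc n) \<bullet> (C v' - C (v (Suc n))))
           \<longlonglongrightarrow> (M u' + C v' - d) \<bullet> \<zeta>"
proof -
  have "(\<lambda>n. y (Suc n) \<bullet> (M u' - - a (Suc n)) + x (Suc n) \<bullet> (C v' - (d - b (Suc n))))
          \<longlonglongrightarrow> \<zeta> \<bullet> (M u' - \<omega>) + \<zeta> \<bullet> (C v' - (d - \<omega>))"
    by (intro tendsto_intros LIMSEQ_Suc x y b a)
  then show ?thesis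
    by (simp add: a_def b_def inner_diff_right inner_add_right inner_commute algebra_simps)
qed

text \<open>Only used for \<open>k \<ge> 1\<close>, where both values are finite (\<open>obj_Suc\<close>); \<open>real_of_ereal\<close> maps
  \<open>\<plusminus>\<infinity>\<close> to \<open>0\<close>.\<close>
definition obj :: "nat \<Rightarrow> real" where
  "obj k = real_of_ereal (f (u k)) + real_of_ereal (g (v k))"

lemma obj_Suc: "f (u (Suc n)) + g (v (Suc n)) = ereal (obj (Suc n))"
proof -
  have "\<bar>f (u (Suc n))\<bar> \<noteq> \<infinity>" "\<bar>g (v (Suc n))\<bar> \<noteq> \<infinity>"
    by (rule proper_fun_finite_if_le[OF f_proper f_subgradient],
        rule proper_fun_finite_if_le[OF g_proper g_subgradient])
  then show ?thesis by (auto simp: obj_def)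
qed

lemma objective_le_lagrangian:
  "f (u (Suc n)) + g (v (Suc n))
     \<le> f u' + g v' + ereal (y (Suc n) \<bullet> (M u' - M (u (Suc n))) + x (Suc n) \<bullet> (C v' - C (v (Suc n))))"
proof -
  have "f (u (Suc n)) + g (v (Suc n))
      \<le> (f u' + ereal (y (Suc n) \<bullet> (M u' - M (u (Suc n))))) + (g v' + ereal (x (Suc n) \<bullet> (C v' - C (v (Suc n)))))"
    by (rule add_mono[OF f_subgradient g_subgradient])
  then show ?thesis
    using f_proper g_proper by (cases "f u'"; cases "g v'") (auto simp: proper_fun_def algebra_simps)
qed

lemma saddle_value:
  obtains us vs P zs where "M us + C vs = d" "f us + g vs = ereal P"
    "\<And>u v. ereal P \<le> f u + g v + ereal ((M u + C v - d) \<bullet> zs)"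
proof -
  obtain us vs zs where sp: "is_saddle_point f g M C d us vs zs" using saddle_exists by blast
  obtain Fs Gs where "f us = ereal Fs" "g vs = ereal Gs" "M us + C vs = d"
    "\<And>u v. ereal (Fs + Gs) \<le> f u + g v + ereal ((M u + C v - d) \<bullet> zs)"
    using saddle_point_optimal[OF f_proper g_proper sp] by blast
  then show thesis using that[of us vs "Fs + Gs" zs] by simp
qed

lemma obj_tendsto:
  assumes lim: "x \<longlonglongrightarrow> \<zeta>" "y \<longlonglongrightarrow> \<zeta>" "b \<longlonglongrightarrow> \<omega>" "(\<lambda>k. - a k) \<longlonglongrightarrow> \<omega>"
    and feas: "M us + C vs = d" and val: "f us + g vs = ereal P"
    and low: "\<And>u v. ereal P \<le> f u + g v + ereal ((M u + C v - d) \<bullet> zs)"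
  shows "(\<lambda>n. obj (Suc n)) \<longlonglongrightarrow> P"
proof -
  define lower where "lower = (\<lambda>n. P - (M (u (Suc n)) + C (v (Suc n)) - d) \<bullet> zs)"
  define upper where
    "upper = (\<lambda>n. P + (y (Suc n) \<bullet> (M us - M (u (Suc n))) + x (Suc n) \<bullet> (C vs - C (v (Suc n)))))"
  have lower_le: "lower n \<le> obj (Suc n)" for n
    using low[of "u (Suc n)" "v (Suc n)"] unfolding obj_Suc lower_def by simp
  have upper_ge: "obj (Suc n) \<le> upper n" for n
    using objective_le_lagrangian[of n us vs] unfolding obj_Suc val upper_def by simp
  have lower_lim: "lower \<longlonglongrightarrow> P"
    using tendsto_diff[OF tendsto_const tendsto_inner[OF LIMSEQ_Suc[OF residual_tendsto_zero] tendsto_const],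
        of P zs] by (simp add: lower_def)
  have "(M us + C vs - d) \<bullet> \<zeta> = 0" using feas by simp
  with tendsto_add[OF tendsto_const lagrangian_terms_tendsto[OF lim, of us vs], of P]
  have upper_lim: "upper \<longlonglongrightarrow> P" unfolding upper_def by (simp only: add_0_right)
  show ?thesis
    using lower_le upper_ge by (intro tendsto_sandwich[OF _ _ lower_lim upper_lim] always_eventually allI)
qed

lemma objective_tendsto:
  assumes "x \<longlonglongrightarrow> \<zeta>" "y \<longlonglongrightarrow> \<zeta>" "b \<longlonglongrightarrow> \<omega>" "(\<lambda>k. - a k) \<longlonglongrightarrow> \<omega>"
  shows "(\<lambda>k. f (u k) + g (v k)) \<longlonglongrightarrow> primal_value f g M C d"
proof -
  obtain us vs P zs where feas: "M us + C vs = d" and val: "f us + g vs = ereal P"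
    and low: "\<And>u v. ereal P \<le> f u + g v + ereal ((M u + C v - d) \<bullet> zs)"
    using saddle_value by blast
  have "primal_value f g M C d = ereal P"
    unfolding val[symmetric]
  proof (rule primal_value_eqI)
    show "M us + C vs = d" by (rule feas)
    show "f us + g vs \<le> f u + g v" if "M u + C v = d" for u v
      using low[of u v] that val by simp
  qed
  then have "(\<lambda>n. f (u (Suc n)) + g (v (Suc n))) \<longlonglongrightarrow> primal_value f g M C d"
    using tendsto_ereal[OF obj_tendsto[OF assms feas val low]] by (simp add: obj_Suc)
  then show ?thesis by (rule LIMSEQ_imp_Suc)
qed

lemma dual_solution:
  assumes lim: "x \<longlonglongrightarrow> \<zeta>" "y \<longlonglongrightarrow> \<zeta>" "b \<longlonglongrightarrow> \<omega>" "(\<lambda>k. - a k) \<longlonglongrightarrow> \<omega>"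
  shows "is_dual_solution f g M C d \<zeta>"
  unfolding is_dual_solution_def
proof
  fix z'
  obtain us vs P zs where feas: "M us + C vs = d" and val: "f us + g vs = ereal P"
    and low: "\<And>u v. ereal P \<le> f u + g v + ereal ((M u + C v - d) \<bullet> zs)"
    using saddle_value by blast
  have "dual_fun f g M C d z' \<le> lagr f g M C d us vs z'"
    unfolding dual_fun_def by (rule INF_lower2[of "(us, vs)"]) auto
  also have "\<dots> = ereal P" using feas val by (simp add: lagr_def)
  also have "ereal P \<le> dual_fun f g M C d \<zeta>"
    unfolding dual_fun_def
  proof (rule INF_greatest)
    fix p :: "'a \<times> 'b"
    obtain u' v' where p: "p = (u', v')" by fastforce
    show "ereal P \<le> lagr f g M C d (fst p) (snd p) \<zeta>"
    proof (cases "f u' + g v' = \<infinity>")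
      case False
      with f_proper g_proper obtain Q where Q: "f u' + g v' = ereal Q"
        by (cases "f u'"; cases "g v'") (auto simp: proper_fun_def)
      have "obj (Suc n) - (y (Suc n) \<bullet> (M u' - M (u (Suc n))) + x (Suc n) \<bullet> (C v' - C (v (Suc n)))) \<le> Q"
        for n using objective_le_lagrangian[of n u' v'] unfolding Q obj_Suc by simp
      moreover have "(\<lambda>n. obj (Suc n) - (y (Suc n) \<bullet> (M u' - M (u (Suc n))) + x (Suc n) \<bullet> (C v' - C (v (Suc n)))))
          \<longlonglongrightarrow> P - (M u' + C v' - d) \<bullet> \<zeta>"
        by (intro tendsto_diff obj_tendsto[OF lim feas val low] lagrangian_terms_tendsto[OF lim])
      ultimately have "P - (M u' + C v' - d) \<bullet> \<zeta> \<le> Q"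
        using LIMSEQ_le[OF _ tendsto_const] by blast
      then show ?thesis using p Q by (simp add: lagr_def)
    next
      case True
      then show ?thesis unfolding p lagr_def fst_conv snd_conv True by simp
    qed
  qed
  finally show "dual_fun f g M C d z' \<le> dual_fun f g M C d \<zeta>" .
qed

end

theorem mainTheorem4:
  fixes f :: "'a::euclidean_space \<Rightarrow> ereal" and g :: "'b::euclidean_space \<Rightarrow> ereal"
    and M :: "'a \<Rightarrow> 'c::euclidean_space" and C :: "'b \<Rightarrow> 'c" and d :: 'c
    and lam rhobar :: real
    and u :: "nat \<Rightarrow> 'a" and v :: "nat \<Rightarrow> 'b" and z w :: "nat \<Rightarrow> 'c"
    and \<gamma> \<rho> :: "nat \<Rightarrow> real"
  assumes f_pcc: "proper_fun f" "closed_fun f" "convex_fun f"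
    and g_pcc: "proper_fun g" "closed_fun g" "convex_fun g"
    and lin: "linear M" "linear C"
    and A1: "\<exists>us vs zs. is_saddle_point f g M C d us vs zs"
    and A2: "rel_interior (edom (fconj f)) \<inter> range (adjoint M) \<noteq> {}"
    and A3: "rel_interior (edom (fconj g)) \<inter> range (adjoint C) \<noteq> {}"
    and lam_pos: "lam > 0"
    and rhobar: "0 \<le> rhobar" "rhobar < 1"
    and pmm: "pmm_seq f g M C d lam rhobar u v z w \<gamma> \<rho>"
  defines "x \<equiv> (\<lambda>k. z (k-1) + lam *\<^sub>R w (k-1) + lam *\<^sub>R (C (v k) - d))"
    and "b \<equiv> (\<lambda>k. d - C (v k))"
    and "y \<equiv> (\<lambda>k. z (k-1) + lam *\<^sub>R w (k-1) + lam *\<^sub>R (C (v k) - d) - lam *\<^sub>R (w (k-1) - M (u k)))"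
    and "a \<equiv> (\<lambda>k. - M (u k))"
  shows "(\<exists>zs ws. is_dual_solution f g M C d zs \<and>
            - ws \<in> subdiff (h1_fun f M) zs \<and> ws \<in> subdiff (h2_fun g C d) zs \<and>
            ((\<lambda>k. (x k, b k)) \<longlonglongrightarrow> (zs, ws)) \<and>
            ((\<lambda>k. (y k, - a k)) \<longlonglongrightarrow> (zs, ws)) \<and>
            ((\<lambda>k. (z k, w k)) \<longlonglongrightarrow> (zs, ws)))
       \<and> ((\<lambda>k. M (u k) + C (v k) - d) \<longlonglongrightarrow> 0)
       \<and> ((\<lambda>k. x k - y k) \<longlonglongrightarrow> 0)
       \<and> ((\<lambda>k. f (u k) + g (v k)) \<longlonglongrightarrow> primal_value f g M C d)"
proof -
  interpret P: pmm_iteration f g M C d lam rhobar u v z w \<gamma> \<rho>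
    using f_pcc(1,3) g_pcc(1,3) lin A1 lam_pos rhobar pmm by (simp add: pmm_iteration_def)
  obtain \<zeta> \<omega> where kkt: "(\<zeta>, \<omega>) \<in> P.kkt_set" and zw: "z \<longlonglongrightarrow> \<zeta>" "w \<longlonglongrightarrow> \<omega>"
    by (rule P.iterates_converge)
  note lim = P.graph_points_tendsto[OF zw]
  have seqs: "x = P.x" "y = P.y" "b = P.b" "a = P.a"
    by (simp_all add: x_def y_def a_def b_def P.x_def P.y_def P.a_def P.b_def)
  show ?thesis
    unfolding seqs
    using P.dual_solution[OF lim] kkt lim zw P.residual_tendsto_zero P.x_minus_y_tendsto_zero
      P.objective_tendsto[OF lim]
    by (auto simp: P.kkt_set_def intro!: tendsto_Pair)
qed

end
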